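(* Let $k$ be a field, $V$ a $k$-vector space, $\varphi\in\operatorname{End}_k(V)$ a finite potent endomorphism with AST-decomposition $V=W_\varphi\oplus U_\varphi$ and core-nilpotent decomposition $\varphi=\varphi_1+\varphi_2$. If $\psi\in\operatorname{End}_k(V)$ is a G-Drazin inverse of $\varphi$, then $\psi=\varphi^D+\psi_2$, where $\varphi^D$ is the Drazin inverse of $\varphi$ and $\psi_2\in\operatorname{End}_k(V)$ is the unique linear map with $\psi_2(v)=0$ for $v\in W_\varphi$ and $\psi_2(v)=\psi(v)$ for $v\in U_\varphi$; moreover $\psi_2$ is a G-Drazin inverse of $\varphi_2$.
   Context: An endomorphism $\varphi$ of a $k$-vector space $V$ is finite potent if $\varphi^n(V)$ is finite dimensional for some $n$. For such $\varphi$, the AST-decomposition is $V=U_\varphi\oplus W_\varphi$ where $U_\varphi=\{v\in V: \varphi^m(v)=0 \text{ for some } m\}$ and $W_\varphi=\{v\in V: p(\varphi)(v)=0 \text{ for some } p(x)\in k[x] \text{ coprime to } x\}$; both are $\varphi$-invariant, $\varphi|_{U_\varphi}$ is nilpotent, $W_\varphi$ is finite dimensional and $\varphi|_{W_\varphi}$ is an automorphism. The index $i(\varphi)$ is the nilpotency order of $\varphi|_{U_\varphi}$. The Drazin inverse $\varphi^D$ is the linear map equal to $(\varphi|_{W_\varphi})^{-1}$ on $W_\varphi$ and to $0$ on $U_\varphi$. The core-nilpotent decomposition is $\varphi=\varphi_1+\varphi_2$ with $\varphi_1=\varphi\circ\varphi^D\circ\varphi$ (equal to $\varphi$ on $W_\varphi$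 and $0$ on $U_\varphi$) and $\varphi_2=\varphi-\varphi_1$ (equal to $0$ on $W_\varphi$ and $\varphi$ on $U_\varphi$). For a finite potent $\theta$ with index $s=i(\theta)$, an endomorphism $\psi$ is a G-Drazin inverse of $\theta$ if $\theta\circ\psi\circ\theta=\theta$ and $\psi\circ\theta^{s}=\theta^{s}\circ\psi$. *)

theory Defs
  imports Main "HOL-Computational_Algebra.Polynomial"
begin

text \<open>Throughout, scale :: 'k::field => 'v => 'v is the scalar multiplication of a
k-vector space V (the type 'v), assumed to satisfy vector_space scale.
Endomorphisms of V are the linear maps 'v => 'v.\<close>

definition endo :: "('k::field \<Rightarrow> 'v::ab_group_add \<Rightarrow> 'v) \<Rightarrow> ('v \<Rightarrow> 'v) \<Rightarrow> bool" where
  "endo scale f \<longleftrightarrow> Vector_Spaces.linear scale scale f"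

definition fin_dim_subspace :: "('k::field \<Rightarrow> 'v::ab_group_add \<Rightarrow> 'v) \<Rightarrow> 'v set \<Rightarrow> bool" where
  "fin_dim_subspace scale S \<longleftrightarrow> (\<exists>B. finite B \<and> module.span scale B = S)"

definition finite_potent :: "('k::field \<Rightarrow> 'v::ab_group_add \<Rightarrow> 'v) \<Rightarrow> ('v \<Rightarrow> 'v) \<Rightarrow> bool" where
  "finite_potent scale \<phi> \<longleftrightarrow> endo scale \<phi> \<and> (\<exists>n. fin_dim_subspace scale (range (\<phi> ^^ n)))"

definition poly_endo :: "('k::field \<Rightarrow> 'v::ab_group_add \<Rightarrow> 'v) \<Rightarrow> 'k poly \<Rightarrow> ('v \<Rightarrow> 'v) \<Rightarrow> 'v \<Rightarrow> 'v" where
  "poly_endo scale p \<phi> v = (\<Sum>i\<le>degree p. scale (coeff p i) ((\<phi> ^^ i) v))"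

definition U_part :: "('v::zero \<Rightarrow> 'v) \<Rightarrow> 'v set" where
  "U_part \<phi> = {v. \<exists>m. (\<phi> ^^ m) v = 0}"

definition W_part :: "('k::field \<Rightarrow> 'v::ab_group_add \<Rightarrow> 'v) \<Rightarrow> ('v \<Rightarrow> 'v) \<Rightarrow> 'v set" where
  "W_part scale \<phi> = {v. \<exists>p::'k poly. coprime p [:0, 1:] \<and> poly_endo scale p \<phi> v = 0}"

definition index :: "('v::zero \<Rightarrow> 'v) \<Rightarrow> nat" where
  "index \<phi> = (LEAST n. \<forall>u\<in>U_part \<phi>. (\<phi> ^^ n) u = 0)"

definition drazin_inv :: "('k::field \<Rightarrow> 'v::ab_group_add \<Rightarrow> 'v) \<Rightarrow> ('v \<Rightarrow> 'v) \<Rightarrow> 'v \<Rightarrow> 'v" where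
  "drazin_inv scale \<phi> = (THE d. endo scale d
      \<and> (\<forall>w\<in>W_part scale \<phi>. d w \<in> W_part scale \<phi> \<and> \<phi> (d w) = w)
      \<and> (\<forall>u\<in>U_part \<phi>. d u = 0))"

definition core_part :: "('k::field \<Rightarrow> 'v::ab_group_add \<Rightarrow> 'v) \<Rightarrow> ('v \<Rightarrow> 'v) \<Rightarrow> 'v \<Rightarrow> 'v" where
  "core_part scale \<phi> = \<phi> \<circ> drazin_inv scale \<phi> \<circ> \<phi>"

definition nil_part :: "('k::field \<Rightarrow> 'v::ab_group_add \<Rightarrow> 'v) \<Rightarrow> ('v \<Rightarrow> 'v) \<Rightarrow> 'v \<Rightarrow> 'v" where
  "nil_part scale \<phi> = (\<lambda>v. \<phi> v - core_part scale \<phi> v)"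

definition G_drazin :: "('k::field \<Rightarrow> 'v::ab_group_add \<Rightarrow> 'v) \<Rightarrow> ('v \<Rightarrow> 'v) \<Rightarrow> ('v \<Rightarrow> 'v) \<Rightarrow> bool" where
  "G_drazin scale \<theta> \<psi> \<longleftrightarrow> finite_potent scale \<theta> \<and> endo scale \<psi>
     \<and> \<theta> \<circ> \<psi> \<circ> \<theta> = \<theta>
     \<and> \<psi> \<circ> (\<theta> ^^ index \<theta>) = (\<theta> ^^ index \<theta>) \<circ> \<psi>"

end

theory Submission
  imports Defs "HOL-Computational_Algebra.Polynomial_Factorial"
begin

text \<open>Finite potency yields a nonzero polynomial \<open>Q\<close> with \<open>Q(\<phi>) \<phi>\<^sup>n = 0\<close>; splitting off
the power of \<open>X\<close> gives \<open>p(\<phi>) \<phi>\<^sup>N = 0\<close> with \<open>p\<close> coprime to \<open>X\<close>, and then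
\<open>U\<^sub>\<phi> = ker \<phi>\<^sup>N\<close> and \<open>W\<^sub>\<phi> = ker p(\<phi>)\<close>. If \<open>c\<close> inverts \<open>X\<close> modulo \<open>p\<close>, then
\<open>(cX)\<^sup>N\<close> is \<open>1\<close> modulo \<open>p\<close> and \<open>0\<close> modulo \<open>X\<^sup>N\<close>, so \<open>proj_W = (cX)\<^sup>N(\<phi>)\<close> is the projection
onto \<open>W\<^sub>\<phi>\<close> along \<open>U\<^sub>\<phi>\<close>, and \<open>\<phi>\<^sup>D = c(\<phi>) \<circ> proj_W\<close>.

Let \<open>\<psi>\<close> be a G-Drazin inverse and \<open>s = i(\<phi>)\<close>. Commuting with \<open>\<phi>\<^sup>s\<close>, which kills
\<open>U\<^sub>\<phi>\<close> and maps onto \<open>W\<^sub>\<phi>\<close>, \<open>\<psi>\<close> preserves both summands; on \<open>W\<^sub>\<phi>\<close> the identity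
\<open>\<phi> \<psi> \<phi> = \<phi>\<close> and injectivity of \<open>\<phi>\<close> force \<open>\<psi> = \<phi>\<^sup>D\<close>. Hence \<open>\<psi> = \<phi>\<^sup>D + \<psi> \<circ> proj_U\<close>,
and \<open>\<psi> \<circ> proj_U\<close> is a G-Drazin inverse of the nilpotent part \<open>\<phi>\<^sub>2 = \<phi> \<circ> proj_U\<close>.\<close>

lemma common_divisor_as_combination:
  fixes a b :: "'a::euclidean_ring_cancel"
  shows "\<exists>x y. x * a + y * b dvd a \<and> x * a + y * b dvd b"
proof (induction "euclidean_size b" arbitrary: a b rule: less_induct)
  case less
  show ?case
  proof (cases "b = 0")
    case True
    then show ?thesis by (intro exI[of _ 1] exI[of _ 0]) simp
  next
    case False
    then have "euclidean_size (a mod b) < euclidean_size b" by (rule mod_size_less)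
    then obtain x y where xy: "x * b + y * (a mod b) dvd b" "x * b + y * (a mod b) dvd a mod b"
      using less by blast
    have "x * b + y * (a mod b) = y * a + (x - y * (a div b)) * b"
      unfolding minus_div_mult_eq_mod[symmetric] by (simp add: algebra_simps)
    moreover have "x * b + y * (a mod b) dvd a"
      using xy by (simp add: dvd_mod_iff)
    ultimately show ?thesis using xy(1) by metis
  qed
qed

lemma coprime_imp_bezout:
  fixes a b :: "'a::euclidean_ring_cancel"
  assumes "coprime a b"
  obtains x y where "x * a + y * b = 1"
proof -
  obtain x y where "x * a + y * b dvd a" "x * a + y * b dvd b"
    using common_divisor_as_combination by blast
  then have "is_unit (x * a + y * b)" using assms coprime_common_divisor by blast
  then obtain z where "1 = (x * a + y * b) * z" by (rule dvdE)
  then have "(z * x) * a + (z * y) * b = 1" by (simp add: algebra_simps)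
  then show ?thesis by (rule that)
qed

lemma coprime_X_if_not_dvd:
  fixes p :: "'k::field poly"
  assumes "\<not> [:0, 1:] dvd p"
  shows "coprime [:0, 1:] p"
proof (rule coprimeI)
  fix d
  assume "d dvd [:0, 1:]" and "d dvd p"
  from \<open>d dvd [:0, 1:]\<close> obtain k where "[:0, 1:] = d * k"
    by (rule dvdE)
  then have "is_unit d \<or> is_unit k"
    using irreducible_linear_field_poly[of 1 0] irreducibleD by (metis one_neq_zero)
  moreover have "\<not> is_unit k"
    using \<open>[:0, 1:] = d * k\<close> \<open>d dvd p\<close> assms by (metis mult_unit_dvd_iff)
  ultimately show "is_unit d" by blast
qed

lemma funpow_index_eq_0:
  assumes "\<forall>u\<in>U_part \<phi>. (\<phi> ^^ n) u = 0" and "u \<in> U_part \<phi>"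
  shows "(\<phi> ^^ index \<phi>) u = 0"
  using LeastI[of "\<lambda>n. \<forall>u\<in>U_part \<phi>. (\<phi> ^^ n) u = 0", OF assms(1)] assms(2)
  unfolding index_def by blast

context vector_space
begin

lemma module_hom_if_endo: "endo scale f \<Longrightarrow> module_hom scale scale f"
  by (simp add: endo_def module_hom_iff_linear)

lemmas endo_add = module_hom.add[OF module_hom_if_endo]
  and endo_scale = module_hom.scale[OF module_hom_if_endo]
  and endo_zero = module_hom.zero[OF module_hom_if_endo]
  and endo_diff = module_hom.diff[OF module_hom_if_endo]
  and endo_sum = module_hom.sum[OF module_hom_if_endo]
  and endo_eq_0_on_span = module_hom.eq_0_on_span[OF module_hom_if_endo]

lemma endo_iff:
  "endo scale f \<longleftrightarrow> (\<forall>x y. f (x + y) = f x + f y) \<and> (\<forall>a x. f (a *s x) = a *s f x)"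
  using vector_space_axioms by (auto simp: endo_def Vector_Spaces.linear_iff)

lemma endo_comp: "endo scale f \<Longrightarrow> endo scale g \<Longrightarrow> endo scale (f \<circ> g)"
  by (simp add: endo_iff)

lemma endo_funpow: "endo scale f \<Longrightarrow> endo scale (f ^^ n)"
  by (induction n) (simp_all add: endo_iff)

lemma family_in_finite_span_dependent:
  assumes "finite B" and "\<And>i. i \<le> card B \<Longrightarrow> f i \<in> span B"
  obtains c i where "i \<le> card B" and "c i \<noteq> 0" and "(\<Sum>j\<le>card B. c j *s f j) = 0"
proof (cases "inj_on f {..card B}")
  case True
  have "dependent (f ` {..card B})"
  proof (rule ccontr)
    assume "independent (f ` {..card B})"
    then have "card (f ` {..card B}) \<le> card B"
      using independent_span_bound[OF assms(1)] assms(2) by blast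
    with True show False by (simp add: card_image)
  qed
  then obtain u v where "v \<in> f ` {..card B}" "u v \<noteq> 0" "(\<Sum>w\<in>f ` {..card B}. u w *s w) = 0"
    by (auto simp: dependent_finite)
  with True show ?thesis
    using that[of _ "u \<circ> f"] by (auto simp: sum.reindex)
next
  case False
  then obtain i j where ij: "i \<le> card B" "j \<le> card B" "i \<noteq> j" "f i = f j"
    by (auto simp: inj_on_def)
  define c :: "nat \<Rightarrow> 'a" where "c k = (if k = i then 1 else 0) - (if k = j then 1 else 0)" for k
  have "(\<Sum>k\<le>card B. c k *s f k) = f i - f j"
    using ij(1,2) unfolding c_def scale_left_diff_distrib sum_subtractf
    by (simp add: if_distrib[of "\<lambda>a. a *s _"] cong: if_cong)
  with ij show ?thesis
    using that[of i c] by (simp add: c_def)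
qed

lemma poly_endo_eq_sum_upto:
  "degree p \<le> n \<Longrightarrow> poly_endo scale p \<phi> v = (\<Sum>i\<le>n. coeff p i *s (\<phi> ^^ i) v)"
  unfolding poly_endo_def by (rule sum.mono_neutral_left) (auto simp: coeff_eq_0)

lemma poly_endo_pCons:
  "poly_endo scale (pCons a p) \<phi> v = a *s v + poly_endo scale p \<phi> (\<phi> v)"
proof -
  have "poly_endo scale (pCons a p) \<phi> v
      = (\<Sum>i\<le>Suc (degree p). coeff (pCons a p) i *s (\<phi> ^^ i) v)"
    by (rule poly_endo_eq_sum_upto) (rule degree_pCons_le)
  also have "\<dots> = a *s v + (\<Sum>i\<le>degree p. coeff p i *s (\<phi> ^^ i) (\<phi> v))"
    by (subst sum.atMost_Suc_shift) (simp add: funpow_Suc_right del: funpow.simps)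
  finally show ?thesis by (simp add: poly_endo_def)
qed

lemma G_drazin_if_nilpotent:
  assumes "endo scale \<theta>" and "endo scale \<psi>" and "\<theta> \<circ> \<psi> \<circ> \<theta> = \<theta>"
    and nilpotent: "\<And>v. (\<theta> ^^ n) v = 0"
  shows "G_drazin scale \<theta> \<psi>"
proof -
  have "range (\<theta> ^^ n) = span {}"
    using nilpotent by auto
  then have "finite_potent scale \<theta>"
    using assms(1) unfolding finite_potent_def fin_dim_subspace_def by blast
  moreover have "(\<theta> ^^ index \<theta>) v = 0" for v
    using nilpotent by (intro funpow_index_eq_0[of _ n]) (auto simp: U_part_def)
  ultimately show ?thesis
    using assms(1-3) by (simp add: G_drazin_def fun_eq_iff endo_zero)
qed

end

locale vector_space_endo = vector_space scale
  for scale :: "'k::field \<Rightarrow> 'v::ab_group_add \<Rightarrow> 'v" (infixr \<open>*s\<close> 75) +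
  fixes \<phi> :: "'v \<Rightarrow> 'v"
  assumes endo_\<phi>: "endo scale \<phi>"
begin

abbreviation ev :: "'k poly \<Rightarrow> 'v \<Rightarrow> 'v" where
  "ev p \<equiv> poly_endo scale p \<phi>"

lemma ev_\<phi>_commute: "ev p (\<phi> v) = \<phi> (ev p v)"
  unfolding poly_endo_def by (simp add: endo_sum[OF endo_\<phi>] endo_scale[OF endo_\<phi>] funpow_swap1)

lemma ev_0 [simp]: "ev 0 v = 0"
  by (simp add: poly_endo_def)

lemma endo_ev: "endo scale (ev p)"
proof (induction p)
  case 0
  show ?case by (simp add: endo_iff)
next
  case (pCons a p)
  then show ?case
    using endo_\<phi> by (simp add: endo_iff poly_endo_pCons algebra_simps scale_left_commute)
qed

lemma ev_add: "ev (p + q) v = ev p v + ev q v"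
proof -
  let ?n = "max (degree p) (degree q)"
  have "ev (p + q) v = (\<Sum>i\<le>?n. coeff (p + q) i *s (\<phi> ^^ i) v)"
    by (rule poly_endo_eq_sum_upto) (rule degree_add_le_max)
  also have "\<dots> = (\<Sum>i\<le>?n. coeff p i *s (\<phi> ^^ i) v) + (\<Sum>i\<le>?n. coeff q i *s (\<phi> ^^ i) v)"
    by (simp add: scale_left_distrib sum.distrib)
  finally show ?thesis
    by (simp add: poly_endo_eq_sum_upto[of p ?n] poly_endo_eq_sum_upto[of q ?n])
qed

lemma ev_diff: "ev (p - q) v = ev p v - ev q v"
  using ev_add[of "p - q" q v] by (simp add: algebra_simps)

lemma ev_smult: "ev (smult a p) v = a *s ev p v"
  using poly_endo_eq_sum_upto[OF degree_smult_le, of a p \<phi> v]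
  by (simp add: poly_endo_def scale_sum_right)

lemma ev_mult: "ev (p * q) v = ev p (ev q v)"
  by (induction p arbitrary: v) (simp_all add: ev_add ev_smult poly_endo_pCons ev_\<phi>_commute)

lemma ev_1 [simp]: "ev 1 v = v"
  by (simp add: one_pCons poly_endo_pCons)

lemma ev_X_power: "ev ([:0, 1:] ^ k) v = (\<phi> ^^ k) v"
  by (induction k arbitrary: v) (simp_all add: poly_endo_pCons ev_mult funpow_swap1)

lemma ev_X: "ev [:0, 1:] v = \<phi> v"
  using ev_X_power[of 1] by simp

lemma ev_commute: "ev p (ev q v) = ev q (ev p v)"
  by (metis ev_mult mult.commute)

lemma ev_funpow_commute: "ev p ((\<phi> ^^ k) v) = (\<phi> ^^ k) (ev p v)"
  by (metis ev_X_power ev_commute)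

lemma ev_eq_0_if_dvd: "p dvd q \<Longrightarrow> ev p v = 0 \<Longrightarrow> ev q v = 0"
  by (auto elim!: dvdE simp: mult.commute[of p] ev_mult endo_zero[OF endo_ev])

lemma ev_eq_0_if_coprime:
  assumes "coprime p q" and "ev p v = 0" and "ev q v = 0"
  shows "v = 0"
proof -
  obtain x y where "x * p + y * q = 1"
    using assms(1) by (rule coprime_imp_bezout)
  then have "v = ev x (ev p v) + ev y (ev q v)"
    by (metis ev_1 ev_add ev_mult)
  with assms(2,3) show ?thesis by (simp add: endo_zero[OF endo_ev])
qed

lemma ev_eq_0_if_coprime_X:
  assumes "coprime q [:0, 1:]" and "ev q v = 0" and "(\<phi> ^^ k) v = 0"
  shows "v = 0"
  using assms(2,3)
proof (induction k arbitrary: v)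
  case (Suc k)
  have "ev q (\<phi> v) = 0"
    using Suc.prems(1) by (simp add: ev_\<phi>_commute endo_zero[OF endo_\<phi>])
  moreover have "(\<phi> ^^ k) (\<phi> v) = 0"
    using Suc.prems(2) by (simp add: funpow_swap1)
  ultimately have "ev [:0, 1:] v = 0"
    using Suc.IH by (simp add: ev_X)
  with assms(1) Suc.prems(1) show "v = 0"
    by (rule ev_eq_0_if_coprime)
qed simp

lemma annihilating_poly_of_finite_span:
  assumes "finite B" and span_B: "span B = range (\<phi> ^^ n)"
  obtains Q where "Q \<noteq> 0" and "\<And>v. ev Q ((\<phi> ^^ n) v) = 0"
proof -
  have "\<exists>q. q \<noteq> 0 \<and> ev q b = 0" if "b \<in> B" for b
  proof -
    have orbit_in_span: "(\<phi> ^^ i) b \<in> span B" for i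
    proof -
      have "b \<in> range (\<phi> ^^ n)"
        using span_B span_base[OF that] by simp
      then obtain y where "b = (\<phi> ^^ n) y"
        by blast
      then have "(\<phi> ^^ i) b = (\<phi> ^^ n) ((\<phi> ^^ i) y)"
        by (metis add.commute comp_apply funpow_add)
      with span_B show ?thesis by simp
    qed
    obtain c i where ci: "i \<le> card B" "c i \<noteq> 0"
      and relation: "(\<Sum>j\<le>card B. c j *s (\<phi> ^^ j) b) = 0"
      using family_in_finite_span_dependent[OF assms(1), of "\<lambda>j. (\<phi> ^^ j) b"] orbit_in_span
      by blast
    define q where "q = (\<Sum>j\<le>card B. monom (c j) j)"
    have coeff_q: "coeff q j = (if j \<le> card B then c j else 0)" for j
      unfolding q_def coeff_sum coeff_monom by simp
    have "q \<noteq> 0"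
      using ci coeff_q by (metis coeff_0)
    moreover have "degree q \<le> card B"
      by (rule degree_le) (simp add: coeff_q)
    then have "ev q b = 0"
      using relation by (simp add: poly_endo_eq_sum_upto coeff_q)
    ultimately show ?thesis by blast
  qed
  then obtain q where q: "\<And>b. b \<in> B \<Longrightarrow> q b \<noteq> 0 \<and> ev (q b) b = 0"
    by metis
  define Q where "Q = (\<Prod>b\<in>B. q b)"
  have "ev Q b = 0" if "b \<in> B" for b
    using q[OF that] ev_eq_0_if_dvd[of "q b" Q] assms(1) that by (auto simp: Q_def)
  then have "ev Q ((\<phi> ^^ n) v) = 0" for v
    using endo_eq_0_on_span[OF endo_ev] span_B by blast
  moreover have "Q \<noteq> 0"
    using assms(1) q by (simp add: Q_def)
  ultimately show ?thesis using that by blast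
qed

lemma finite_potent_ast_polys:
  assumes "finite_potent scale \<phi>"
  obtains p N c where "\<And>v. ev (p * [:0, 1:] ^ N) v = 0" and "p dvd c * [:0, 1:] - 1"
proof -
  obtain n B where "finite B" and "span B = range (\<phi> ^^ n)"
    using assms unfolding finite_potent_def fin_dim_subspace_def by blast
  then obtain Q where "Q \<noteq> 0" and Q: "\<And>v. ev Q ((\<phi> ^^ n) v) = 0"
    by (rule annihilating_poly_of_finite_span) blast
  then obtain m p where Qp: "Q = [:0, 1:] ^ m * p" and "\<not> [:0, 1:] dvd p"
    using order_decomp[of Q 0] by auto
  have "ev (p * [:0, 1:] ^ (m + n)) v = ev Q ((\<phi> ^^ n) v)" for v
    unfolding Qp power_add by (simp only: ev_mult ev_X_power ev_funpow_commute)
  then have "ev (p * [:0, 1:] ^ (m + n)) v = 0" for v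
    using Q by simp
  moreover have "coprime [:0, 1:] p"
    using \<open>\<not> [:0, 1:] dvd p\<close> by (rule coprime_X_if_not_dvd)
  then obtain x y where bezout: "x * [:0, 1:] + y * p = 1"
    by (rule coprime_imp_bezout)
  then have "x * [:0, 1:] - 1 = p * - y"
    by (simp add: algebra_simps eq_diff_eq)
  then have "p dvd x * [:0, 1:] - 1" ..
  ultimately show ?thesis using that by blast
qed

end

locale ast_decomposition = vector_space_endo scale \<phi>
  for scale :: "'k::field \<Rightarrow> 'v::ab_group_add \<Rightarrow> 'v" (infixr \<open>*s\<close> 75) and \<phi> +
  fixes p :: "'k poly" and N :: nat and c :: "'k poly"
  assumes annihilates: "ev (p * [:0, 1:] ^ N) v = 0"
    and inverts_X: "p dvd c * [:0, 1:] - 1"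
begin

abbreviation U :: "'v set" where
  "U \<equiv> U_part \<phi>"

abbreviation W :: "'v set" where
  "W \<equiv> W_part scale \<phi>"

definition proj_W :: "'v \<Rightarrow> 'v" where
  "proj_W = ev ((c * [:0, 1:]) ^ N)"

definition proj_U :: "'v \<Rightarrow> 'v" where
  "proj_U = ev (1 - (c * [:0, 1:]) ^ N)"

lemma dvd_cX_power_minus_1: "p dvd (c * [:0, 1:]) ^ k - 1"
  using inverts_X power_diff_1_eq[of "c * [:0, 1:]" k] by (metis dvd_mult2)

lemma X_power_dvd_cX_power: "[:0, 1:] ^ k dvd (c * [:0, 1:]) ^ k"
  unfolding power_mult_distrib by (rule dvd_triv_right)

lemma coprime_p_X: "coprime p [:0, 1:]"
proof (rule coprimeI)
  fix d
  assume "d dvd p" and "d dvd [:0, 1:]"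
  have "d dvd c * [:0, 1:]"
    using \<open>d dvd [:0, 1:]\<close> by (rule dvd_mult)
  moreover have "d dvd c * [:0, 1:] - 1"
    using \<open>d dvd p\<close> inverts_X by (rule dvd_trans)
  ultimately have "d dvd c * [:0, 1:] - (c * [:0, 1:] - 1)"
    by (rule dvd_diff)
  then show "is_unit d" by simp
qed

lemma ev_kernel_invariant: "ev p w = 0 \<Longrightarrow> ev p (ev q w) = 0"
  using ev_commute[of p q w] endo_zero[OF endo_ev, of q] by simp

lemma ev_c_power_inverts_funpow: "ev p w = 0 \<Longrightarrow> ev (c ^ k) ((\<phi> ^^ k) w) = w"
proof -
  assume "ev p w = 0"
  have "ev (c ^ k) ((\<phi> ^^ k) w) = ev ((c * [:0, 1:]) ^ k) w"
    by (simp only: power_mult_distrib ev_mult ev_X_power)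
  also have "\<dots> = ev ((c * [:0, 1:]) ^ k - 1) w + w"
    by (simp only: ev_diff ev_1 diff_add_cancel)
  also have "ev ((c * [:0, 1:]) ^ k - 1) w = 0"
    using dvd_cX_power_minus_1 \<open>ev p w = 0\<close> by (rule ev_eq_0_if_dvd)
  finally show ?thesis by simp
qed

lemma endo_proj_U: "endo scale proj_U"
  by (simp add: proj_U_def endo_ev)

lemma endo_proj_W: "endo scale proj_W"
  by (simp add: proj_W_def endo_ev)

lemma proj_U_\<phi>_commute: "proj_U (\<phi> v) = \<phi> (proj_U v)"
  by (simp add: proj_U_def ev_\<phi>_commute)

lemma proj_U_plus_proj_W: "proj_U v + proj_W v = v"
  by (simp add: proj_U_def proj_W_def ev_diff)

lemma ev_p_proj_W: "ev p (proj_W v) = 0"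
proof -
  have "p * [:0, 1:] ^ N dvd p * (c * [:0, 1:]) ^ N"
    by (rule mult_dvd_mono[OF dvd_refl X_power_dvd_cX_power])
  then show ?thesis
    unfolding proj_W_def ev_mult[symmetric] using annihilates by (rule ev_eq_0_if_dvd)
qed

lemma funpow_N_proj_U: "(\<phi> ^^ N) (proj_U v) = 0"
proof -
  have "p dvd 1 - (c * [:0, 1:]) ^ N"
    using dvd_cX_power_minus_1 by (simp add: dvd_diff_commute)
  then have "p * [:0, 1:] ^ N dvd [:0, 1:] ^ N * (1 - (c * [:0, 1:]) ^ N)"
    by (simp add: mult.commute mult_dvd_mono)
  then show ?thesis
    unfolding proj_U_def ev_X_power[symmetric] ev_mult[symmetric] using annihilates
    by (rule ev_eq_0_if_dvd)
qed

lemma proj_W_eq_0_if_funpow_N: "(\<phi> ^^ N) u = 0 \<Longrightarrow> proj_W u = 0"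
  unfolding proj_W_def ev_X_power[symmetric] by (rule ev_eq_0_if_dvd[OF X_power_dvd_cX_power])

lemma proj_U_eq_0_if_ev_p: "ev p w = 0 \<Longrightarrow> proj_U w = 0"
  unfolding proj_U_def
  by (rule ev_eq_0_if_dvd) (use dvd_cX_power_minus_1 in \<open>simp add: dvd_diff_commute\<close>)

lemma U_iff: "u \<in> U \<longleftrightarrow> (\<phi> ^^ N) u = 0"
proof
  assume "u \<in> U"
  then obtain m where "(\<phi> ^^ m) u = 0"
    by (auto simp: U_part_def)
  moreover have "(\<phi> ^^ m) (proj_W u) = proj_W ((\<phi> ^^ m) u)"
    by (simp add: proj_W_def ev_funpow_commute)
  ultimately have "(\<phi> ^^ m) (proj_W u) = 0"
    by (simp add: endo_zero[OF endo_proj_W])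
  then have "proj_W u = 0"
    using ev_c_power_inverts_funpow[OF ev_p_proj_W[of u], of m] by (simp add: endo_zero[OF endo_ev])
  then show "(\<phi> ^^ N) u = 0"
    using funpow_N_proj_U[of u] proj_U_plus_proj_W[of u] by simp
qed (auto simp: U_part_def)

lemma W_iff: "w \<in> W \<longleftrightarrow> ev p w = 0"
proof
  assume "w \<in> W"
  then obtain q where "coprime q [:0, 1:]" and "ev q w = 0"
    by (auto simp: W_part_def)
  then have "ev q (proj_U w) = 0"
    by (simp add: proj_U_def ev_commute[of q] endo_zero[OF endo_ev])
  with \<open>coprime q [:0, 1:]\<close> have "proj_U w = 0"
    using funpow_N_proj_U by (rule ev_eq_0_if_coprime_X)
  then show "ev p w = 0"
    using ev_p_proj_W[of w] proj_U_plus_proj_W[of w] by simp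
qed (use coprime_p_X in \<open>auto simp: W_part_def\<close>)

lemma proj_U_in_U: "proj_U v \<in> U"
  by (simp add: U_iff funpow_N_proj_U)

lemma proj_W_in_W: "proj_W v \<in> W"
  by (simp add: W_iff ev_p_proj_W)

lemma proj_U_on_U: "u \<in> U \<Longrightarrow> proj_U u = u"
  using proj_U_plus_proj_W[of u] by (simp add: U_iff proj_W_eq_0_if_funpow_N)

lemma proj_W_on_W: "w \<in> W \<Longrightarrow> proj_W w = w"
  using proj_U_plus_proj_W[of w] by (simp add: W_iff proj_U_eq_0_if_ev_p)

lemma proj_U_on_W: "w \<in> W \<Longrightarrow> proj_U w = 0"
  by (simp add: W_iff proj_U_eq_0_if_ev_p)

lemma proj_W_on_U: "u \<in> U \<Longrightarrow> proj_W u = 0"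
  by (simp add: U_iff proj_W_eq_0_if_funpow_N)

lemma W_invariant: "w \<in> W \<Longrightarrow> ev q w \<in> W"
  by (simp add: W_iff ev_kernel_invariant)

lemma \<phi>_in_W: "w \<in> W \<Longrightarrow> \<phi> w \<in> W"
  using W_invariant[of w "[:0, 1:]"] by (simp add: ev_X)

lemma \<phi>_ev_c_on_W: "w \<in> W \<Longrightarrow> \<phi> (ev c w) = w"
  using ev_c_power_inverts_funpow[of w 1] by (simp add: W_iff ev_\<phi>_commute)

lemma \<phi>_inj_on_W: "w \<in> W \<Longrightarrow> \<phi> w = 0 \<Longrightarrow> w = 0"
  using ev_c_power_inverts_funpow[of w 1] by (simp add: W_iff endo_zero[OF endo_ev])

lemma endo_eq_on_U_W:
  assumes "endo scale f" and "endo scale g"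
    and "\<And>u. u \<in> U \<Longrightarrow> f u = g u" and "\<And>w. w \<in> W \<Longrightarrow> f w = g w"
  shows "f = g"
proof
  fix v
  have "f v = f (proj_U v) + f (proj_W v)"
    using endo_add[OF assms(1)] proj_U_plus_proj_W[of v] by metis
  also have "\<dots> = g (proj_U v) + g (proj_W v)"
    by (simp add: assms(3,4) proj_U_in_U proj_W_in_W)
  also have "\<dots> = g v"
    using endo_add[OF assms(2)] proj_U_plus_proj_W[of v] by metis
  finally show "f v = g v" .
qed

lemma drazin_inv_eq: "drazin_inv scale \<phi> = ev c \<circ> proj_W"
  unfolding drazin_inv_def
proof (rule the_equality)
  show "endo scale (ev c \<circ> proj_W)
      \<and> (\<forall>w\<in>W. (ev c \<circ> proj_W) w \<in> W \<and> \<phi> ((ev c \<circ> proj_W) w) = w)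
      \<and> (\<forall>u\<in>U. (ev c \<circ> proj_W) u = 0)"
    by (simp add: endo_comp endo_ev endo_proj_W proj_W_on_W proj_W_on_U W_invariant
        \<phi>_ev_c_on_W endo_zero[OF endo_ev])
next
  fix d
  assume d: "endo scale d \<and> (\<forall>w\<in>W. d w \<in> W \<and> \<phi> (d w) = w) \<and> (\<forall>u\<in>U. d u = 0)"
  show "d = ev c \<circ> proj_W"
  proof (rule endo_eq_on_U_W)
    fix w
    assume "w \<in> W"
    then have "d w - ev c w \<in> W" and "\<phi> (d w - ev c w) = 0"
      using d \<phi>_ev_c_on_W by (simp_all add: W_iff ev_kernel_invariant endo_diff[OF endo_ev]
          endo_diff[OF endo_\<phi>])
    then show "d w = (ev c \<circ> proj_W) w"
      using \<open>w \<in> W\<close> \<phi>_inj_on_W[of "d w - ev c w"] by (simp add: proj_W_on_W)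
  qed (use d in \<open>simp_all add: endo_comp endo_ev endo_proj_W proj_W_on_U endo_zero[OF endo_ev]\<close>)
qed

lemma nil_part_eq: "nil_part scale \<phi> = \<phi> \<circ> proj_U"
proof
  fix v
  have "core_part scale \<phi> v = proj_W (\<phi> v)"
    by (simp add: core_part_def drazin_inv_eq \<phi>_ev_c_on_W proj_W_in_W)
  then show "nil_part scale \<phi> v = (\<phi> \<circ> proj_U) v"
    using proj_U_plus_proj_W[of "\<phi> v"]
    by (simp add: nil_part_def proj_U_\<phi>_commute diff_eq_eq)
qed

lemma funpow_in_U: "u \<in> U \<Longrightarrow> (\<phi> ^^ k) u \<in> U"
proof -
  assume "u \<in> U"
  have "(\<phi> ^^ N) ((\<phi> ^^ k) u) = (\<phi> ^^ k) ((\<phi> ^^ N) u)"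
    by (metis add.commute comp_apply funpow_add)
  with \<open>u \<in> U\<close> show ?thesis
    by (simp add: U_iff endo_zero[OF endo_funpow[OF endo_\<phi>]])
qed

lemma funpow_\<phi>_proj_U: "((\<phi> \<circ> proj_U) ^^ Suc k) v = (\<phi> ^^ Suc k) (proj_U v)"
proof (induction k)
  case (Suc k)
  have "((\<phi> \<circ> proj_U) ^^ Suc (Suc k)) v = \<phi> (proj_U (((\<phi> \<circ> proj_U) ^^ Suc k) v))"
    by (simp only: funpow.simps(2) comp_apply)
  also have "\<dots> = \<phi> (proj_U ((\<phi> ^^ Suc k) (proj_U v)))"
    by (simp only: Suc.IH)
  also have "\<dots> = \<phi> ((\<phi> ^^ Suc k) (proj_U v))"
    using funpow_in_U[OF proj_U_in_U] by (simp only: proj_U_on_U)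
  also have "\<dots> = (\<phi> ^^ Suc (Suc k)) (proj_U v)"
    by (simp only: funpow.simps(2) comp_apply)
  finally show ?case .
qed simp

lemma \<phi>_proj_U_nilpotent: "((\<phi> \<circ> proj_U) ^^ Suc N) v = 0"
  unfolding funpow_\<phi>_proj_U using funpow_N_proj_U[of v] by (simp add: endo_zero[OF endo_\<phi>])

lemma funpow_index_on_U: "u \<in> U \<Longrightarrow> (\<phi> ^^ index \<phi>) u = 0"
  by (rule funpow_index_eq_0[of _ N]) (simp_all add: U_iff)

lemma funpow_index_in_W: "(\<phi> ^^ index \<phi>) v \<in> W"
proof -
  have "(\<phi> ^^ index \<phi>) v = (\<phi> ^^ index \<phi>) (proj_U v) + (\<phi> ^^ index \<phi>) (proj_W v)"
    using endo_add[OF endo_funpow[OF endo_\<phi>]] proj_U_plus_proj_W[of v] by metis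
  also have "\<dots> = ev ([:0, 1:] ^ index \<phi>) (proj_W v)"
    by (simp add: funpow_index_on_U proj_U_in_U ev_X_power)
  finally show ?thesis
    using W_invariant proj_W_in_W by simp
qed

context
  fixes \<psi> :: "'v \<Rightarrow> 'v"
  assumes G_drazin_\<psi>: "G_drazin scale \<phi> \<psi>"
begin

lemma endo_\<psi>: "endo scale \<psi>"
  using G_drazin_\<psi> by (simp add: G_drazin_def)

lemma \<phi>_\<psi>_\<phi>: "\<phi> (\<psi> (\<phi> v)) = \<phi> v"
  using G_drazin_\<psi> by (simp add: G_drazin_def fun_eq_iff)

lemma \<psi>_funpow_index_commute: "\<psi> ((\<phi> ^^ index \<phi>) v) = (\<phi> ^^ index \<phi>) (\<psi> v)"
  using G_drazin_\<psi> by (simp add: G_drazin_def fun_eq_iff)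

lemma \<psi>_in_U: "u \<in> U \<Longrightarrow> \<psi> u \<in> U"
  using \<psi>_funpow_index_commute[of u] funpow_index_on_U[of u] endo_zero[OF endo_\<psi>]
  by (auto simp: U_part_def)

lemma \<psi>_in_W: "w \<in> W \<Longrightarrow> \<psi> w \<in> W"
proof -
  assume "w \<in> W"
  then have "w = (\<phi> ^^ index \<phi>) (ev (c ^ index \<phi>) w)"
    using ev_c_power_inverts_funpow[of w "index \<phi>"] by (simp add: W_iff ev_funpow_commute)
  then have "\<psi> w = (\<phi> ^^ index \<phi>) (\<psi> (ev (c ^ index \<phi>) w))"
    by (metis \<psi>_funpow_index_commute)
  then show ?thesis
    using funpow_index_in_W by simp
qed

lemma \<psi>_on_W: "w \<in> W \<Longrightarrow> \<psi> w = ev c w"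
proof -
  have left_inverse: "\<psi> (\<phi> x) = x" if "x \<in> W" for x
  proof -
    have "\<psi> (\<phi> x) - x \<in> W"
      using that \<psi>_in_W[OF \<phi>_in_W[OF that]]
      by (simp add: W_iff endo_diff[OF endo_ev])
    moreover have "\<phi> (\<psi> (\<phi> x) - x) = 0"
      by (simp add: endo_diff[OF endo_\<phi>] \<phi>_\<psi>_\<phi>)
    ultimately show ?thesis
      using \<phi>_inj_on_W by fastforce
  qed
  assume "w \<in> W"
  then have "\<psi> w = \<psi> (\<phi> (ev c w))"
    by (simp add: \<phi>_ev_c_on_W)
  also have "\<dots> = ev c w"
    using \<open>w \<in> W\<close> by (simp add: left_inverse W_invariant)
  finally show ?thesis .
qed

lemma \<psi>_eq_drazin_inv_plus: "\<psi> = (\<lambda>v. drazin_inv scale \<phi> v + (\<psi> \<circ> proj_U) v)"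
proof
  fix v
  have "\<psi> v = \<psi> (proj_U v) + \<psi> (proj_W v)"
    using endo_add[OF endo_\<psi>] proj_U_plus_proj_W[of v] by metis
  then show "\<psi> v = drazin_inv scale \<phi> v + (\<psi> \<circ> proj_U) v"
    by (simp add: drazin_inv_eq \<psi>_on_W proj_W_in_W)
qed

lemma \<psi>_proj_U_characterization:
  "endo scale (\<psi> \<circ> proj_U) \<and> (\<forall>w\<in>W. (\<psi> \<circ> proj_U) w = 0) \<and> (\<forall>u\<in>U. (\<psi> \<circ> proj_U) u = \<psi> u)"
  by (simp add: endo_comp endo_\<psi> endo_proj_U proj_U_on_W proj_U_on_U endo_zero[OF endo_\<psi>])

lemma G_drazin_nil_part: "G_drazin scale (nil_part scale \<phi>) (\<psi> \<circ> proj_U)"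
  unfolding nil_part_eq
proof (rule G_drazin_if_nilpotent)
  show "endo scale (\<phi> \<circ> proj_U)" and "endo scale (\<psi> \<circ> proj_U)"
    by (simp_all add: endo_comp endo_\<phi> endo_\<psi> endo_proj_U)
  show "(\<phi> \<circ> proj_U) \<circ> (\<psi> \<circ> proj_U) \<circ> (\<phi> \<circ> proj_U) = \<phi> \<circ> proj_U"
  proof
    fix v
    have "\<phi> (proj_U v) \<in> U"
      using funpow_in_U[OF proj_U_in_U[of v], of 1] by simp
    then show "((\<phi> \<circ> proj_U) \<circ> (\<psi> \<circ> proj_U) \<circ> (\<phi> \<circ> proj_U)) v = (\<phi> \<circ> proj_U) v"
      by (simp add: proj_U_on_U \<psi>_in_U \<phi>_\<psi>_\<phi>)
  qed
  show "((\<phi> \<circ> proj_U) ^^ Suc N) v = 0" for v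
    by (rule \<phi>_proj_U_nilpotent)
qed

end

end

theorem corollary3p5:
  fixes scale :: "'k::field \<Rightarrow> 'v::ab_group_add \<Rightarrow> 'v"
    and \<phi> \<psi> :: "'v \<Rightarrow> 'v"
  assumes "vector_space scale"
    and "finite_potent scale \<phi>"
    and "G_drazin scale \<phi> \<psi>"
  shows "(\<exists>!\<psi>2. endo scale \<psi>2
            \<and> (\<forall>w\<in>W_part scale \<phi>. \<psi>2 w = 0)
            \<and> (\<forall>u\<in>U_part \<phi>. \<psi>2 u = \<psi> u))
       \<and> (\<forall>\<psi>2. endo scale \<psi>2
            \<and> (\<forall>w\<in>W_part scale \<phi>. \<psi>2 w = 0)
            \<and> (\<forall>u\<in>U_part \<phi>. \<psi>2 u = \<psi> u)
          \<longrightarrow> \<psi> = (\<lambda>v. drazin_inv scale \<phi> v + \<psi>2 v)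
              \<and> G_drazin scale (nil_part scale \<phi>) \<psi>2)"
proof -
  interpret vector_space_endo scale \<phi>
    using assms(1,2) by (simp add: vector_space_endo_def vector_space_endo_axioms_def finite_potent_def)
  obtain p N c where "\<And>v. ev (p * [:0, 1:] ^ N) v = 0" and "p dvd c * [:0, 1:] - 1"
    using finite_potent_ast_polys[OF assms(2)] by blast
  then interpret ast_decomposition scale \<phi> p N c
    by unfold_locales
  have unique: "\<psi>2 = \<psi> \<circ> proj_U"
    if "endo scale \<psi>2 \<and> (\<forall>w\<in>W. \<psi>2 w = 0) \<and> (\<forall>u\<in>U. \<psi>2 u = \<psi> u)" for \<psi>2
    using that \<psi>_proj_U_characterization[OF assms(3)] by (auto intro!: endo_eq_on_U_W)
  show ?thesis
  proof (intro conjI allI impI)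
    show "\<exists>!\<psi>2. endo scale \<psi>2 \<and> (\<forall>w\<in>W. \<psi>2 w = 0) \<and> (\<forall>u\<in>U. \<psi>2 u = \<psi> u)"
      using \<psi>_proj_U_characterization[OF assms(3)] unique by blast
    fix \<psi>2
    assume "endo scale \<psi>2 \<and> (\<forall>w\<in>W. \<psi>2 w = 0) \<and> (\<forall>u\<in>U. \<psi>2 u = \<psi> u)"
    then have "\<psi>2 = \<psi> \<circ> proj_U"
      by (rule unique)
    then show "\<psi> = (\<lambda>v. drazin_inv scale \<phi> v + \<psi>2 v)"
      and "G_drazin scale (nil_part scale \<phi>) \<psi>2"
      using \<psi>_eq_drazin_inv_plus[OF assms(3)] G_drazin_nil_part[OF assms(3)] by blast+
  qed
qed

end
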